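(* Let $(W_i,\partial_i)_i$, $(\widehat W_i,\widehat\partial_i)_i$ and $(V_i,d_i)_i$ be complexes of real vector spaces, and for each $i$ let $E_{W_i}:\widehat W_i\to W_i$, $\widehat R_{W_i}:W_i\to\widehat W_i$, $\mathcal{E}_i:W_i\to V_i$, $\mathcal{R}_i:V_i\to W_i$ be linear maps satisfying: (A1) $\widehat R_{W_i}E_{W_i}$ restricted to $\ker\widehat\partial_i$ is the identity of $\ker\widehat\partial_i$; (A2) $(E_{W_{i+1}}\widehat R_{W_{i+1}}-\mathrm{Id}_{W_{i+1}})(\ker\partial_{i+1})\subset\operatorname{Im}\partial_i$; (A3) $\widehat R_{W_{i+1}}\partial_i=\widehat\partial_i\widehat R_{W_i}$ and $E_{W_{i+1}}\widehat\partial_i=\partial_iE_{W_i}$; (B1) $\mathcal{R}_i\mathcal{E}_i=\mathrm{Id}_{W_i}$; (B2) $(\mathcal{E}_{i+1}\mathcal{R}_{i+1}-\mathrm{Id}_{V_{i+1}})(\ker d_{i+1})\subset\operatorname{Im}d_i$; (B3) $\mathcal{R}_{i+1}d_i=\partial_i\mathcal{R}_i$ and $\mathcal{E}_{i+1}\partial_i=d_i\mathcal{E}_i$. Let $\widehat V_i$, $\widehat d_i$, $E_{V_i}$, $\widehat R_{V_i}$ be as defined in the context. Then, for all $i$: (i) $\widehat R_{V_i}E_{V_i}$ restricted to $\ker\widehat d_i$ is the identity of $\ker\widehat d_i$; (ii) $(E_{V_{i+1}}\widehat R_{V_{i+1}}-\mathrm{Id}_{V_{i+1}})(\ker d_{i+1})\subset\operatorname{Im}d_i$;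 (iii) $\widehat R_{V_{i+1}}d_i=\widehat d_i\widehat R_{V_i}$ and $E_{V_{i+1}}\widehat d_i=d_iE_{V_i}$.
   Context: A complex $(W_i,\partial_i)_i$ is a sequence of vector spaces indexed by integers with linear maps $\partial_i:W_i\to W_{i+1}$, $\partial_{i+1}\partial_i=0$. Set $C_i\coloneq\ker\mathcal{R}_i\subset V_i$. Under (B1), every $v\in V_i$ can be written uniquely as $v=\mathcal{E}_iv_w+v_c$ with $v_w\in W_i$, $v_c\in C_i$; define $\Pi_{C_i}v\coloneq v_c$. Define $\widehat V_i\coloneq\widehat W_i\times C_i$, with elements $\widehat v=(\widehat v_w,\widehat v_c)$, and $\widehat d_i:\widehat V_i\to\widehat V_{i+1}$ by $\widehat d_i(\widehat v_w,\widehat v_c)\coloneq(\widehat\partial_i\widehat v_w,d_i\widehat v_c)$ (well defined since $d_iC_i\subset C_{i+1}$ under (B3)). Define $E_{V_i}:\widehat V_i\to V_i$ by $E_{V_i}(\widehat v_w,\widehat v_c)\coloneq\mathcal{E}_iE_{W_i}\widehat v_w+\widehat v_c$ and $\widehat R_{V_i}:V_i\to\widehat V_i$ by $\widehat R_{V_i}v\coloneq(\widehat R_{W_i}\mathcal{R}_iv,\Pi_{C_i}v)$. *)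

theory Defs
  imports "HOL-Analysis.Analysis"
begin

text \<open>A complex indexed by the integers is modelled by a family of real
subspaces X i of an ambient real vector space, together with maps
\<delta> i that are linear from X i to X (i+1), with \<delta> (i+1) \<circ> \<delta> i = 0 on X i.\<close>

definition lin_on :: "'a::real_vector set \<Rightarrow> 'b::real_vector set \<Rightarrow> ('a \<Rightarrow> 'b) \<Rightarrow> bool" where
  "lin_on A B f \<longleftrightarrow> f ` A \<subseteq> B \<and>
     (\<forall>x\<in>A. \<forall>y\<in>A. f (x + y) = f x + f y) \<and>
     (\<forall>c. \<forall>x\<in>A. f (c *\<^sub>R x) = c *\<^sub>R f x)"

definition is_complex :: "(int \<Rightarrow> 'a::real_vector set) \<Rightarrow> (int \<Rightarrow> 'a \<Rightarrow> 'a) \<Rightarrow> bool" where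
  "is_complex X \<delta> \<longleftrightarrow> (\<forall>i. subspace (X i) \<and> lin_on (X i) (X (i + 1)) (\<delta> i)) \<and>
     (\<forall>i. \<forall>x\<in>X i. \<delta> (i + 1) (\<delta> i x) = 0)"

definition Csp :: "(int \<Rightarrow> 'v::real_vector set) \<Rightarrow> (int \<Rightarrow> 'v \<Rightarrow> 'w::real_vector) \<Rightarrow> int \<Rightarrow> 'v set" where
  "Csp V Rc i = {v \<in> V i. Rc i v = 0}"

definition PiC :: "(int \<Rightarrow> 'w::real_vector set) \<Rightarrow> (int \<Rightarrow> 'v::real_vector set) \<Rightarrow>
    (int \<Rightarrow> 'w \<Rightarrow> 'v) \<Rightarrow> (int \<Rightarrow> 'v \<Rightarrow> 'w) \<Rightarrow> int \<Rightarrow> 'v \<Rightarrow> 'v" where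
  "PiC W V Ec Rc i v = (THE vc. vc \<in> Csp V Rc i \<and> (\<exists>vw\<in>W i. v = Ec i vw + vc))"

definition Vhat :: "(int \<Rightarrow> 'hw set) \<Rightarrow> (int \<Rightarrow> 'v::real_vector set) \<Rightarrow> (int \<Rightarrow> 'v \<Rightarrow> 'w::real_vector)
    \<Rightarrow> int \<Rightarrow> ('hw \<times> 'v) set" where
  "Vhat Wh V Rc i = Wh i \<times> Csp V Rc i"

definition dhat :: "(int \<Rightarrow> 'hw \<Rightarrow> 'hw) \<Rightarrow> (int \<Rightarrow> 'v \<Rightarrow> 'v) \<Rightarrow> int \<Rightarrow> 'hw \<times> 'v \<Rightarrow> 'hw \<times> 'v" where
  "dhat dh d i = (\<lambda>(a, c). (dh i a, d i c))"

definition EV :: "(int \<Rightarrow> 'w \<Rightarrow> 'v::real_vector) \<Rightarrow> (int \<Rightarrow> 'hw \<Rightarrow> 'w) \<Rightarrow> int \<Rightarrow> 'hw \<times> 'v \<Rightarrow> 'v" where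
  "EV Ec EW i = (\<lambda>(a, c). Ec i (EW i a) + c)"

definition RV :: "(int \<Rightarrow> 'w::real_vector set) \<Rightarrow> (int \<Rightarrow> 'v::real_vector set) \<Rightarrow>
    (int \<Rightarrow> 'w \<Rightarrow> 'hw) \<Rightarrow> (int \<Rightarrow> 'w \<Rightarrow> 'v) \<Rightarrow> (int \<Rightarrow> 'v \<Rightarrow> 'w) \<Rightarrow> int \<Rightarrow> 'v \<Rightarrow> 'hw \<times> 'v" where
  "RV W V RW Ec Rc i v = (RW i (Rc i v), PiC W V Ec Rc i v)"

end

theory Submission
  imports Defs
begin

text \<open>By (B1), \<open>\<E>\<^sub>i \<R>\<^sub>i\<close> is a projection of \<open>V\<^sub>i\<close> onto the image of \<open>\<E>\<^sub>i\<close> with kernel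
\<open>C\<^sub>i\<close>, so \<open>\<Pi>\<^sub>C = Id - \<E> \<R>\<close>. Hence \<open>E\<^sub>V R\<^sub>V - Id = \<E> (E\<^sub>W R\<^sub>W - Id) \<R>\<close>, and every claim
splits into a \<open>W\<close>-component, settled by (A1)--(A3) transported along \<open>\<E>\<close> and \<open>\<R>\<close>
with (B1) and (B3), and a \<open>C\<close>-component, on which \<open>\<R>\<close> vanishes.\<close>

lemma lin_on_mem:
  assumes "lin_on A B f" "x \<in> A"
  shows "f x \<in> B"
  using assms unfolding lin_on_def by blast

lemma lin_on_add:
  assumes "lin_on A B f" "x \<in> A" "y \<in> A"
  shows "f (x + y) = f x + f y"
  using assms unfolding lin_on_def by blast

lemma lin_on_diff:
  assumes "lin_on A B f" "subspace A" "x \<in> A" "y \<in> A"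
  shows "f (x - y) = f x - f y"
proof -
  have "(-1) *\<^sub>R y \<in> A" using subspace_neg[OF assms(2) assms(4)] by simp
  then have "f (x + (-1) *\<^sub>R y) = f x + (-1) *\<^sub>R f y"
    using assms unfolding lin_on_def by metis
  then show ?thesis by simp
qed

lemma lin_on_zero:
  assumes "lin_on A B f" "subspace A"
  shows "f 0 = 0"
  using lin_on_diff[OF assms, of 0 0] assms by (simp add: subspace_0)

locale complex_reduction =
  fixes W :: "int \<Rightarrow> 'w::real_vector set" and pd :: "int \<Rightarrow> 'w \<Rightarrow> 'w"
    and Wh :: "int \<Rightarrow> 'hw::real_vector set" and pdh :: "int \<Rightarrow> 'hw \<Rightarrow> 'hw"
    and V :: "int \<Rightarrow> 'v::real_vector set" and d :: "int \<Rightarrow> 'v \<Rightarrow> 'v"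
    and EW :: "int \<Rightarrow> 'hw \<Rightarrow> 'w" and RW :: "int \<Rightarrow> 'w \<Rightarrow> 'hw"
    and Ec :: "int \<Rightarrow> 'w \<Rightarrow> 'v" and Rc :: "int \<Rightarrow> 'v \<Rightarrow> 'w"
  assumes subspace_W: "\<And>i. subspace (W i)" and subspace_V: "\<And>i. subspace (V i)"
    and lin_d: "\<And>i. lin_on (V i) (V (i + 1)) (d i)"
    and lin_EW: "\<And>i. lin_on (Wh i) (W i) (EW i)"
    and lin_RW: "\<And>i. lin_on (W i) (Wh i) (RW i)"
    and lin_Ec: "\<And>i. lin_on (W i) (V i) (Ec i)"
    and lin_Rc: "\<And>i. lin_on (V i) (W i) (Rc i)"
    and A1: "\<And>i x. x \<in> Wh i \<Longrightarrow> pdh i x = 0 \<Longrightarrow> RW i (EW i x) = x"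
    and A2: "\<And>i x. x \<in> W (i + 1) \<Longrightarrow> pd (i + 1) x = 0 \<Longrightarrow>
      EW (i + 1) (RW (i + 1) x) - x \<in> pd i ` W i"
    and A3a: "\<And>i x. x \<in> W i \<Longrightarrow> RW (i + 1) (pd i x) = pdh i (RW i x)"
    and A3b: "\<And>i x. x \<in> Wh i \<Longrightarrow> EW (i + 1) (pdh i x) = pd i (EW i x)"
    and B1: "\<And>i x. x \<in> W i \<Longrightarrow> Rc i (Ec i x) = x"
    and B3a: "\<And>i v. v \<in> V i \<Longrightarrow> Rc (i + 1) (d i v) = pd i (Rc i v)"
    and B3b: "\<And>i x. x \<in> W i \<Longrightarrow> Ec (i + 1) (pd i x) = d i (Ec i x)"
begin

lemma Rc_mem: "v \<in> V i \<Longrightarrow> Rc i v \<in> W i"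
  using lin_on_mem[OF lin_Rc] .

lemma Ec_mem: "x \<in> W i \<Longrightarrow> Ec i x \<in> V i"
  using lin_on_mem[OF lin_Ec] .

lemma EW_mem: "x \<in> Wh i \<Longrightarrow> EW i x \<in> W i"
  using lin_on_mem[OF lin_EW] .

lemma Rc_EW_plus_C:
  assumes "a \<in> Wh i" "c \<in> Csp V Rc i"
  shows "Rc i (Ec i (EW i a) + c) = EW i a"
  using assms lin_on_add[OF lin_Rc Ec_mem[OF EW_mem]] B1[OF EW_mem]
  unfolding Csp_def by simp

lemma PiC_eq:
  assumes "v \<in> V i"
  shows "PiC W V Ec Rc i v = v - Ec i (Rc i v)"
  unfolding PiC_def
proof (rule the_equality)
  have "Rc i (v - Ec i (Rc i v)) = 0"
    using lin_on_diff[OF lin_Rc subspace_V assms Ec_mem] B1 Rc_mem assms by simp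
  then show "v - Ec i (Rc i v) \<in> Csp V Rc i \<and> (\<exists>vw\<in>W i. v = Ec i vw + (v - Ec i (Rc i v)))"
    unfolding Csp_def using assms Rc_mem Ec_mem subspace_V by (auto simp: subspace_diff)
next
  fix vc assume "vc \<in> Csp V Rc i \<and> (\<exists>vw\<in>W i. v = Ec i vw + vc)"
  then obtain vw where vw: "vw \<in> W i" "v = Ec i vw + vc" and c: "vc \<in> V i" "Rc i vc = 0"
    unfolding Csp_def by auto
  have "Rc i v = vw" using vw lin_on_add[OF lin_Rc Ec_mem c(1)] c B1 by simp
  then show "vc = v - Ec i (Rc i v)" using vw by simp
qed

lemma RV_EV_on_cycles:
  assumes p: "p \<in> Vhat Wh V Rc i" and cycle: "dhat pdh d i p = 0"
  shows "RV W V RW Ec Rc i (EV Ec EW i p) = p"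
proof -
  obtain a c where pac: "p = (a, c)" and a: "a \<in> Wh i" and c: "c \<in> Csp V Rc i"
    using p unfolding Vhat_def by auto
  have "pdh i a = 0" using cycle pac unfolding dhat_def by (simp add: zero_prod_def)
  moreover have "Ec i (EW i a) + c \<in> V i"
    using c subspace_V Ec_mem[OF EW_mem[OF a]] unfolding Csp_def by (simp add: subspace_add)
  ultimately show ?thesis
    unfolding RV_def EV_def pac using PiC_eq Rc_EW_plus_C[OF a c] A1 a by simp
qed

lemma EV_RV_minus_id_on_cycles:
  assumes v: "v \<in> V (i + 1)" and cycle: "d (i + 1) v = 0"
  shows "EV Ec EW (i + 1) (RV W V RW Ec Rc (i + 1) v) - v \<in> d i ` V i"
proof -
  let ?x = "Rc (i + 1) v"
  have "pd (i + 1) ?x = 0"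
    using B3a[OF v] cycle lin_on_zero[OF lin_Rc subspace_V] by simp
  then obtain w where w: "w \<in> W i" "EW (i + 1) (RW (i + 1) ?x) - ?x = pd i w"
    using A2 Rc_mem[OF v] by blast
  have ERx: "EW (i + 1) (RW (i + 1) ?x) \<in> W (i + 1)"
    using EW_mem lin_on_mem[OF lin_RW Rc_mem[OF v]] by blast
  have "EV Ec EW (i + 1) (RV W V RW Ec Rc (i + 1) v) - v
      = Ec (i + 1) (EW (i + 1) (RW (i + 1) ?x)) - Ec (i + 1) ?x"
    unfolding EV_def RV_def using PiC_eq[OF v] by simp
  also have "\<dots> = Ec (i + 1) (pd i w)"
    using lin_on_diff[OF lin_Ec subspace_W ERx Rc_mem[OF v]] w by simp
  also have "\<dots> = d i (Ec i w)" using B3b w by blast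
  finally show ?thesis using Ec_mem w(1) by blast
qed

lemma RV_d_commute:
  assumes v: "v \<in> V i"
  shows "RV W V RW Ec Rc (i + 1) (d i v) = dhat pdh d i (RV W V RW Ec Rc i v)"
proof -
  have "d i v \<in> V (i + 1)" using lin_on_mem[OF lin_d v] .
  then show ?thesis
    unfolding RV_def dhat_def
    using PiC_eq v B3a A3a B3b Rc_mem lin_on_diff[OF lin_d subspace_V v Ec_mem[OF Rc_mem[OF v]]]
    by simp
qed

lemma EV_dhat_commute:
  assumes p: "p \<in> Vhat Wh V Rc i"
  shows "EV Ec EW (i + 1) (dhat pdh d i p) = d i (EV Ec EW i p)"
proof -
  obtain a c where pac: "p = (a, c)" and a: "a \<in> Wh i" and c: "c \<in> V i"
    using p unfolding Vhat_def Csp_def by auto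
  show ?thesis
    unfolding EV_def dhat_def pac
    using A3b a B3b EW_mem lin_on_add[OF lin_d Ec_mem[OF EW_mem[OF a]] c] by simp
qed

end

theorem theorem7:
  fixes W :: "int \<Rightarrow> 'w::real_vector set" and pd :: "int \<Rightarrow> 'w \<Rightarrow> 'w"
    and Wh :: "int \<Rightarrow> 'hw::real_vector set" and pdh :: "int \<Rightarrow> 'hw \<Rightarrow> 'hw"
    and V :: "int \<Rightarrow> 'v::real_vector set" and d :: "int \<Rightarrow> 'v \<Rightarrow> 'v"
    and EW :: "int \<Rightarrow> 'hw \<Rightarrow> 'w" and RW :: "int \<Rightarrow> 'w \<Rightarrow> 'hw"
    and Ec :: "int \<Rightarrow> 'w \<Rightarrow> 'v" and Rc :: "int \<Rightarrow> 'v \<Rightarrow> 'w"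
  assumes cW: "is_complex W pd" and cWh: "is_complex Wh pdh" and cV: "is_complex V d"
    and linEW: "\<forall>i. lin_on (Wh i) (W i) (EW i)"
    and linRW: "\<forall>i. lin_on (W i) (Wh i) (RW i)"
    and linEc: "\<forall>i. lin_on (W i) (V i) (Ec i)"
    and linRc: "\<forall>i. lin_on (V i) (W i) (Rc i)"
    and A1: "\<forall>i. \<forall>x\<in>Wh i. pdh i x = 0 \<longrightarrow> RW i (EW i x) = x"
    and A2: "\<forall>i. \<forall>x\<in>W (i + 1). pd (i + 1) x = 0 \<longrightarrow> EW (i + 1) (RW (i + 1) x) - x \<in> pd i ` W i"
    and A3a: "\<forall>i. \<forall>x\<in>W i. RW (i + 1) (pd i x) = pdh i (RW i x)"
    and A3b: "\<forall>i. \<forall>x\<in>Wh i. EW (i + 1) (pdh i x) = pd i (EW i x)"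
    and B1: "\<forall>i. \<forall>x\<in>W i. Rc i (Ec i x) = x"
    and B2: "\<forall>i. \<forall>v\<in>V (i + 1). d (i + 1) v = 0 \<longrightarrow> Ec (i + 1) (Rc (i + 1) v) - v \<in> d i ` V i"
    and B3a: "\<forall>i. \<forall>v\<in>V i. Rc (i + 1) (d i v) = pd i (Rc i v)"
    and B3b: "\<forall>i. \<forall>x\<in>W i. Ec (i + 1) (pd i x) = d i (Ec i x)"
  shows "\<forall>i.
     (\<forall>p\<in>Vhat Wh V Rc i. dhat pdh d i p = 0 \<longrightarrow> RV W V RW Ec Rc i (EV Ec EW i p) = p)
   \<and> (\<forall>v\<in>V (i + 1). d (i + 1) v = 0 \<longrightarrow>
        EV Ec EW (i + 1) (RV W V RW Ec Rc (i + 1) v) - v \<in> d i ` V i)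
   \<and> (\<forall>v\<in>V i. RV W V RW Ec Rc (i + 1) (d i v) = dhat pdh d i (RV W V RW Ec Rc i v))
   \<and> (\<forall>p\<in>Vhat Wh V Rc i. EV Ec EW (i + 1) (dhat pdh d i p) = d i (EV Ec EW i p))"
proof -
  interpret complex_reduction W pd Wh pdh V d EW RW Ec Rc
    using cW cV linEW linRW linEc linRc A1 A2 A3a A3b B1 B3a B3b
    by unfold_locales (auto simp: is_complex_def)
  show ?thesis
    using RV_EV_on_cycles EV_RV_minus_id_on_cycles RV_d_commute EV_dhat_commute by blast
qed

end
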